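(* Let $T$ be a binary tree rooted at $O$, with all edges having activation probability $p\in(0,1]$. Let $v$ be a vertex of $T$ with two outgoing edges $e_1,e_2$. Then $$\frac{|\Lambda(e_1)|+|\Lambda(e_2)|}{\tau(e_1)+\tau(e_2)}<\frac12.$$
   Context: Setting: the stochastic search game on a finite tree $T$ rooted at $O$. Every edge has length $1$ and is active at each stage independently with the same probability $p\in(0,1]$. The searcher moves along active edges or waits, and the hider's payoff is the expected first time the searcher traverses his edge. Orient the edges away from $O$. For a vertex $v$, $T_v$ is the subtree rooted at $v$ consisting of all edges below $v$. For an edge $e=(u,w)$, $T_e$ is $\{e\}\cup T_w$, rooted at $u$. $T$ is binary if every vertex has at most two outgoing edges. Cycle time: for a vertex or edge $z$, $\tau(z)$ is the expected time needed to start at the root of $T_z$, traverse every edge of $T_z$ and return to the root, using a depth-first strategy. Equivalently, for binary trees: - $\tau(v)=0$ if $v$ has no outgoing edge; - $\tau(e)=\tau(w)+2/p$ for $e=(u,w)$; - $\tau(v)=\tau(e)$ if $v$ has exactly one outgoing edge $e$; - $\tau(v)=\tau(w_1)+\tau(w_2)+3/p+1/(1-(1-p)^2)$ if $v$ has outgoing edges to $w_1,w_2$. The function $\Lambda$ is defined recursively on rooted binary trees. Write $\Lambda(v)=\Lambda(T_v)$ and $\Lambda(e)=\Lambda(T_e)$. - $\Lambda(v)=0$ if $v$ has no outgoing edge. - If the root $r$ has a single outgoing edge $e=(r,w)$, then $\Lambda(r)=\Lambda(e)=\Lambda(w)$. In particular, a one-edge tree has $\Lambda=0$. - If $r$ has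 two outgoing edges $e_1=(r,w_1)$ and $e_2=(r,w_2)$, then $$\Lambda(r)=\frac{\tau(e_1)}{\tau(e_1)+\tau(e_2)}\Lambda(w_1)+\frac{\tau(e_2)}{\tau(e_1)+\tau(e_2)}\Lambda(w_2)+\frac12\Big(\frac1{1-(1-p)^2}-\frac1p\Big).$$ In particular, for the tree consisting of two edges at the root, $\Lambda=\frac12\big(\frac1{1-(1-p)^2}-\frac1p\big)$. *)

theory Defs
  imports Complex_Main
begin

text \<open>Rooted binary trees (shapes). A vertex is either a leaf (no outgoing edge),
  has exactly one outgoing edge to a subtree, or has two outgoing edges to
  two subtrees. All edges have length 1.\<close>
datatype btree = Leaf | One btree | Two btree btree

fun subtrees :: "btree \<Rightarrow> btree set" where
  "subtrees Leaf = {Leaf}"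
| "subtrees (One t) = insert (One t) (subtrees t)"
| "subtrees (Two a b) = insert (Two a b) (subtrees a \<union> subtrees b)"

fun tau :: "real \<Rightarrow> btree \<Rightarrow> real" where
  "tau p Leaf = 0"
| "tau p (One t) = tau p t + 2 / p"
| "tau p (Two a b) = tau p a + tau p b + 3 / p + 1 / (1 - (1 - p)^2)"

text \<open>Cycle time of an edge e = (u,w), where w has subtree t: tau(e) = tau(w) + 2/p.\<close>
definition tau_edge :: "real \<Rightarrow> btree \<Rightarrow> real" where
  "tau_edge p t = tau p t + 2 / p"

fun Lam :: "real \<Rightarrow> btree \<Rightarrow> real" where
  "Lam p Leaf = 0"
| "Lam p (One t) = Lam p t"
| "Lam p (Two a b) =
     tau_edge p a / (tau_edge p a + tau_edge p b) * Lam p a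
   + tau_edge p b / (tau_edge p a + tau_edge p b) * Lam p b
   + 1/2 * (1 / (1 - (1 - p)^2) - 1 / p)"

text \<open>Lambda of an edge e = (u,w) whose head w has subtree t.\<close>
definition Lam_edge :: "real \<Rightarrow> btree \<Rightarrow> real" where
  "Lam_edge p t = Lam p t"

end

theory Submission
  imports Defs
begin

text \<open>By induction on the tree, \<open>\<bar>\<Lambda>(v)\<bar> \<le> \<tau>(v)/2\<close> for every vertex.
  At a branching vertex \<open>\<Lambda>\<close> is a convex combination of the children's values plus a constant of
  absolute value at most \<open>1/(2p)\<close>, while \<open>\<tau>\<close> adds up the children's values plus more than \<open>3/p\<close>.
  Each edge adds \<open>2/p > 0\<close> to \<open>\<tau>\<close> but nothing to \<open>\<Lambda>\<close>, which makes the final bound strict.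
  The bound holds for any two trees \<open>w1, w2\<close>.\<close>

lemma first_of_two_wait_bounds:
  fixes p :: real
  assumes "0 < p" "p \<le> 1"
  shows "0 < 1 / (1 - (1 - p)^2)" "1 / (1 - (1 - p)^2) \<le> 1 / p"
proof -
  have eq: "1 - (1 - p)^2 = p * (2 - p)"
    by (simp add: power2_eq_square algebra_simps)
  have "p \<le> p * (2 - p)" "0 < p * (2 - p)"
    using assms by (simp_all add: mult_le_cancel_left1)
  then show "0 < 1 / (1 - (1 - p)^2)" "1 / (1 - (1 - p)^2) \<le> 1 / p"
    using assms eq by (simp_all add: frac_le)
qed

lemma tau_nonneg:
  assumes "0 < p" "p \<le> 1"
  shows "0 \<le> tau p t"
  using first_of_two_wait_bounds[OF assms] assms by (induction t) auto

lemma tau_edge_pos: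
  assumes "0 < p" "p \<le> 1"
  shows "0 < tau_edge p t"
  unfolding tau_edge_def using tau_nonneg[OF assms, of t] assms
  by (simp add: add_nonneg_pos)

lemma abs_weighted_sum_le:
  fixes u v x y c :: real
  assumes "0 \<le> u" "u \<le> 1" "0 \<le> v" "v \<le> 1"
  shows "\<bar>u * x + v * y + c\<bar> \<le> \<bar>x\<bar> + \<bar>y\<bar> + \<bar>c\<bar>"
proof -
  have "\<bar>u * x + v * y + c\<bar> \<le> u * \<bar>x\<bar> + v * \<bar>y\<bar> + \<bar>c\<bar>"
    using assms abs_triangle_ineq[of "u * x + v * y" c] abs_triangle_ineq[of "u * x" "v * y"]
    by (simp add: abs_mult)
  also have "\<dots> \<le> \<bar>x\<bar> + \<bar>y\<bar> + \<bar>c\<bar>"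
    using assms by (intro add_mono mult_left_le_one_le) auto
  finally show ?thesis .
qed

lemma abs_Lam_le_half_tau:
  assumes "0 < p" "p \<le> 1"
  shows "\<bar>Lam p t\<bar> \<le> tau p t / 2"
proof (induction t)
  case Leaf
  then show ?case by simp
next
  case (One t)
  then show ?case
    using assms by (simp add: add_divide_distrib add_increasing2)
next
  case (Two a b)
  define ta tb where "ta = tau_edge p a" and "tb = tau_edge p b"
  define q r where "q = 1 / (1 - (1 - p)^2)" and "r = 1 / p"
  have "0 < ta" "0 < tb"
    unfolding ta_def tb_def using tau_edge_pos[OF assms] by auto
  then have weights: "0 \<le> ta / (ta + tb)" "ta / (ta + tb) \<le> 1"
    "0 \<le> tb / (ta + tb)" "tb / (ta + tb) \<le> 1"
    by auto
  have q: "0 < q" "q \<le> r"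
    unfolding q_def r_def using first_of_two_wait_bounds[OF assms] by auto
  have "\<bar>Lam p (Two a b)\<bar> = \<bar>ta / (ta + tb) * Lam p a + tb / (ta + tb) * Lam p b + (q - r) / 2\<bar>"
    by (simp add: ta_def tb_def q_def r_def)
  also have "\<dots> \<le> \<bar>Lam p a\<bar> + \<bar>Lam p b\<bar> + \<bar>(q - r) / 2\<bar>"
    using weights by (rule abs_weighted_sum_le)
  also have "\<dots> \<le> (tau p a + tau p b + 3 * r + q) / 2"
    using Two.IH q by (simp add: abs_of_nonpos field_simps)
  also have "\<dots> = tau p (Two a b) / 2"
    by (simp add: q_def r_def)
  finally show ?case .
qed

theorem mainTheorem7:
  fixes p :: real and T w1 w2 :: btree
  assumes "0 < p" and "p \<le> 1"
    and "Two w1 w2 \<in> subtrees T"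
  shows "(\<bar>Lam_edge p w1\<bar> + \<bar>Lam_edge p w2\<bar>) / (tau_edge p w1 + tau_edge p w2) < 1/2"
proof -
  have pos: "0 < tau_edge p w1 + tau_edge p w2"
    using tau_edge_pos[OF assms(1,2)] by (simp add: add_pos_pos)
  have "\<bar>Lam_edge p w1\<bar> + \<bar>Lam_edge p w2\<bar> \<le> (tau p w1 + tau p w2) / 2"
    using abs_Lam_le_half_tau[OF assms(1,2)] unfolding Lam_edge_def
    by (simp add: add_mono add_divide_distrib)
  also have "\<dots> < (tau_edge p w1 + tau_edge p w2) / 2"
    using assms(1) by (simp add: tau_edge_def)
  finally show ?thesis
    using pos by (simp add: divide_simps)
qed

end
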